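(* Let $A\in\mathbb{R}^{n\times n}$ be monotone, let $A=P_1-R_1+S_1$ be a double weak regular splitting and $A=P_2-R_2+S_2$ a double regular splitting of $A$. Suppose $-1\notin\sigma(R_2P_1^{-1})$ and $\widehat{\mathcal{A}}^{-1}\geq 0$, where $\widehat{\mathcal{A}}=(I+R_2P_1^{-1})A$. If $P_1^{-1}R_1\geq P_2^{-1}R_2$, $P_2^{-1}S_2\geq P_1^{-1}S_1$ and $P_2^{-1}R_2+P_2^{-1}S_2\leq 0$, then $\rho(\mathcal{W}_{12})\leq\min\{\rho(T_1),\rho(T_2)\}<1$, where $$\mathcal{W}_{12}=\begin{pmatrix} P_2^{-1}R_2P_1^{-1}R_1-P_2^{-1}S_2 & -P_2^{-1}R_2P_1^{-1}S_1\\ I & 0\end{pmatrix},\qquad T_i=\begin{pmatrix} P_i^{-1}R_i & -P_i^{-1}S_i\\ I&0\end{pmatrix}\ (i=1,2).$$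
   Context: Inequalities are entrywise; $\rho$ is the spectral radius, $\sigma$ the spectrum. $A$ is monotone if $A$ is nonsingular and $A^{-1}\geq 0$. A double splitting $A=P-R+S$ with $P$ nonsingular is a double regular splitting if $P^{-1}\geq0$, $R\geq0$, $S\leq0$, and a double weak regular splitting if $P^{-1}\geq 0$, $P^{-1}R\geq0$, $P^{-1}S\leq0$. *)

theory Defs
  imports "Jordan_Normal_Form.Spectral_Radius"
begin

text \<open>Matrices are JNF matrices of type real mat; the order on matrices is entrywise
(less_eq_mat, which also requires equal dimensions). Q is (the) inverse of M.\<close>

definition is_inverse_mat :: "nat \<Rightarrow> real mat \<Rightarrow> real mat \<Rightarrow> bool" where
  "is_inverse_mat n M Q \<longleftrightarrow> M \<in> carrier_mat n n \<and> Q \<in> carrier_mat n n \<and>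
     M * Q = 1\<^sub>m n \<and> Q * M = 1\<^sub>m n"

definition monotone_mat :: "nat \<Rightarrow> real mat \<Rightarrow> bool" where
  "monotone_mat n M \<longleftrightarrow> (\<exists>Q. is_inverse_mat n M Q \<and> 0\<^sub>m n n \<le> Q)"

definition double_regular_splitting ::
  "nat \<Rightarrow> real mat \<Rightarrow> real mat \<Rightarrow> real mat \<Rightarrow> real mat \<Rightarrow> real mat \<Rightarrow> bool" where
  "double_regular_splitting n A P R S Pinv \<longleftrightarrow>
     A \<in> carrier_mat n n \<and> R \<in> carrier_mat n n \<and> S \<in> carrier_mat n n \<and>
     is_inverse_mat n P Pinv \<and> A = P - R + S \<and>
     0\<^sub>m n n \<le> Pinv \<and> 0\<^sub>m n n \<le> R \<and> S \<le> 0\<^sub>m n n"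

definition double_weak_regular_splitting ::
  "nat \<Rightarrow> real mat \<Rightarrow> real mat \<Rightarrow> real mat \<Rightarrow> real mat \<Rightarrow> real mat \<Rightarrow> bool" where
  "double_weak_regular_splitting n A P R S Pinv \<longleftrightarrow>
     A \<in> carrier_mat n n \<and> R \<in> carrier_mat n n \<and> S \<in> carrier_mat n n \<and>
     is_inverse_mat n P Pinv \<and> A = P - R + S \<and>
     0\<^sub>m n n \<le> Pinv \<and> 0\<^sub>m n n \<le> Pinv * R \<and> Pinv * S \<le> 0\<^sub>m n n"

definition rspectrum :: "real mat \<Rightarrow> complex set" where
  "rspectrum M = spectrum (map_mat complex_of_real M)"

definition rho :: "real mat \<Rightarrow> real" where
  "rho M = spectral_radius (map_mat complex_of_real M)"

end

theory Submission
  imports Defs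
begin

text \<open>
  All matrices involved are entrywise nonnegative, so their spectral radii can be compared by
  Collatz--Wielandt bounds: \<open>\<rho>(M) \<le> s\<close> if \<open>M z \<le> s z\<close> for some positive \<open>z\<close>, and
  \<open>t \<le> \<rho>(M)\<close> if \<open>t w \<le> M w\<close> for some nonzero \<open>w \<ge> 0\<close>; the latter because the powers of a
  matrix with spectral radius below \<open>r\<close> grow at most like \<open>r\<^sup>k\<close> (Jordan normal form).
  For a companion matrix \<open>[X Y; I 0]\<close> the test vector \<open>(x, x/s)\<close> reduces the upper bound to
  \<open>X x + Y x/s \<le> s x\<close>.

  Write \<open>X\<^sub>i = P\<^sub>i\<inverse> R\<^sub>i\<close> and \<open>Y\<^sub>i = -P\<^sub>i\<inverse> S\<^sub>i\<close>. Entrywise comparison gives \<open>\<rho>(T\<^sub>2) \<le> \<rho>(T\<^sub>1)\<close>,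
  and \<open>x = A\<inverse> 1\<close> gives \<open>(X\<^sub>2 + Y\<^sub>2) x = x - P\<^sub>2\<inverse> 1 < x\<close>, hence \<open>\<rho>(T\<^sub>2) < 1\<close>.
  For \<open>\<rho>(T\<^sub>2) < s < 1\<close> the matrix \<open>B = X\<^sub>2/s + Y\<^sub>2/s\<^sup>2\<close> has \<open>\<rho>(B) < 1\<close>, and a partial sum of
  its Neumann series applied to \<open>P\<^sub>2\<inverse> 1\<close> yields \<open>x > 0\<close> with \<open>X\<^sub>2 x + Y\<^sub>2 x/s \<le> s x\<close> and
  \<open>A x \<ge> 0\<close>. Through the first splitting \<open>A x \<ge> 0\<close> becomes \<open>X\<^sub>1 x + Y\<^sub>1 x \<le> x\<close>, and with
  \<open>X\<^sub>2 \<le> Y\<^sub>2\<close> these make \<open>(x, x/s)\<close> a test vector showing \<open>\<rho>(W\<^sub>1\<^sub>2) \<le> s\<close>.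
\<close>

section \<open>Nonnegative matrices and vectors\<close>

lemma index_mult_mat_vec_sum:
  assumes "A \<in> carrier_mat n m" "x \<in> carrier_vec m" "i < n"
  shows "(A *\<^sub>v x) $ i = (\<Sum>j<m. A $$ (i, j) * x $ j)"
  using assms by (auto simp: scalar_prod_def atLeast0LessThan intro!: sum.cong)

lemma mult_mat_vec_mono:
  fixes A :: "real mat"
  assumes A: "A \<in> carrier_mat n m" and A0: "0\<^sub>m n m \<le> A"
    and x: "x \<in> carrier_vec m" and y: "y \<in> carrier_vec m" and xy: "x \<le> y"
  shows "A *\<^sub>v x \<le> A *\<^sub>v y"
proof -
  have "(A *\<^sub>v x) $ i \<le> (A *\<^sub>v y) $ i" if i: "i < n" for i
    unfolding index_mult_mat_vec_sum[OF A x i] index_mult_mat_vec_sum[OF A y i]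
    using A0 xy i A x y by (intro sum_mono mult_left_mono) (auto simp: less_eq_vec_def less_eq_mat_def)
  then show ?thesis using A x y by (simp add: less_eq_vec_def)
qed

lemma mult_mat_vec_nonneg:
  fixes A :: "real mat"
  assumes A: "A \<in> carrier_mat n m" and "0\<^sub>m n m \<le> A" and x: "x \<in> carrier_vec m" and "0\<^sub>v m \<le> x"
  shows "0\<^sub>v n \<le> A *\<^sub>v x"
proof -
  have "A *\<^sub>v 0\<^sub>v m = 0\<^sub>v n" using A by (intro eq_vecI) (auto simp: scalar_prod_def)
  then show ?thesis using mult_mat_vec_mono[OF assms(1,2) zero_carrier_vec x assms(4)] by simp
qed

lemma mult_mat_vec_mono_left:
  fixes A B :: "real mat"
  assumes A: "A \<in> carrier_mat n m" and B: "B \<in> carrier_mat n m" and AB: "A \<le> B"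
    and x: "x \<in> carrier_vec m" and x0: "0\<^sub>v m \<le> x"
  shows "A *\<^sub>v x \<le> B *\<^sub>v x"
proof -
  have "(A *\<^sub>v x) $ i \<le> (B *\<^sub>v x) $ i" if i: "i < n" for i
    unfolding index_mult_mat_vec_sum[OF A x i] index_mult_mat_vec_sum[OF B x i]
    using AB x0 i A B x by (intro sum_mono mult_right_mono) (auto simp: less_eq_vec_def less_eq_mat_def)
  then show ?thesis using A B x by (simp add: less_eq_vec_def)
qed

lemma mult_mat_nonneg:
  fixes A B :: "real mat"
  assumes "A \<in> carrier_mat n k" "B \<in> carrier_mat k m" "0\<^sub>m n k \<le> A" "0\<^sub>m k m \<le> B"
  shows "0\<^sub>m n m \<le> A * B"
  using assms by (auto simp: less_eq_mat_def scalar_prod_def intro!: sum_nonneg)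

lemma mult_mat_nonpos:
  fixes A B :: "real mat"
  assumes "A \<in> carrier_mat n k" "B \<in> carrier_mat k m" "0\<^sub>m n k \<le> A" "B \<le> 0\<^sub>m k m"
  shows "A * B \<le> 0\<^sub>m n m"
  using assms by (auto simp: less_eq_mat_def scalar_prod_def intro!: sum_nonpos mult_nonneg_nonpos)

lemma uminus_mat_mono:
  fixes A B :: "'a :: ordered_ab_group_add mat"
  shows "A \<le> B \<Longrightarrow> - B \<le> - A"
  by (auto simp: less_eq_mat_def)

lemma uminus_mat_nonneg:
  fixes M :: "'a :: ordered_ab_group_add mat"
  shows "M \<le> 0\<^sub>m n m \<Longrightarrow> 0\<^sub>m n m \<le> - M"
  by (auto simp: less_eq_mat_def)

lemma pow_mat_nonneg:
  fixes M :: "real mat"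
  assumes M: "M \<in> carrier_mat n n" and M0: "0\<^sub>m n n \<le> M"
  shows "0\<^sub>m n n \<le> M ^\<^sub>m k"
proof (induction k)
  case 0
  show ?case using M by (auto simp: less_eq_mat_def)
next
  case (Suc k)
  then show ?case using mult_mat_nonneg[OF pow_carrier_mat[OF M] M _ M0] by simp
qed

section \<open>Spectral radius of nonnegative matrices\<close>

lemma rho_nonneg:
  assumes "M \<in> carrier_mat n n" and "n > 0"
  shows "0 \<le> rho M"
  using spectral_radius_mem_max(1)[of "map_mat complex_of_real M" n] assms
  unfolding rho_def by auto

lemma rho_eigenvector:
  assumes "M \<in> carrier_mat n n" and "n > 0"
  obtains ev v where "eigenvector (map_mat complex_of_real M) v ev" and "cmod ev = rho M"
  using spectral_radius_mem_max(1)[of "map_mat complex_of_real M" n] assms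
  unfolding rho_def spectrum_def eigenvalue_def by auto

lemma eigenvalue_norm_le_rho:
  assumes "M \<in> carrier_mat n n" and "n > 0"
    and "eigenvector (map_mat complex_of_real M) v ev"
  shows "cmod ev \<le> rho M"
  using spectral_radius_mem_max(2)[of "map_mat complex_of_real M" n] assms
  unfolding rho_def spectrum_def eigenvalue_def by auto

lemma norm_mult_mat_vec_le:
  fixes M :: "real mat"
  assumes M: "M \<in> carrier_mat n n" and M0: "0\<^sub>m n n \<le> M"
    and v: "v \<in> carrier_vec n" and i: "i < n"
  shows "cmod ((map_mat complex_of_real M *\<^sub>v v) $ i) \<le> (M *\<^sub>v map_vec cmod v) $ i"
proof -
  have Mc: "map_mat complex_of_real M \<in> carrier_mat n n" using M by simp
  have "cmod ((map_mat complex_of_real M *\<^sub>v v) $ i) \<le> (\<Sum>j<n. cmod (complex_of_real (M $$ (i, j)) * v $ j))"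
    unfolding index_mult_mat_vec_sum[OF Mc v i] using M i by (auto intro: norm_sum order.trans)
  also have "\<dots> = (M *\<^sub>v map_vec cmod v) $ i"
    unfolding index_mult_mat_vec_sum[OF M map_carrier_vec[THEN iffD2, OF v] i]
    using M0 M v i by (intro sum.cong) (auto simp: norm_mult less_eq_mat_def)
  finally show ?thesis .
qed

lemma nonneg_mat_rho_subeigenvector:
  fixes M :: "real mat"
  assumes M: "M \<in> carrier_mat n n" and n: "n > 0" and M0: "0\<^sub>m n n \<le> M"
  obtains w where "w \<in> carrier_vec n" "0\<^sub>v n \<le> w" "w \<noteq> 0\<^sub>v n" "rho M \<cdot>\<^sub>v w \<le> M *\<^sub>v w"
proof -
  obtain ev v where ev: "eigenvector (map_mat complex_of_real M) v ev" and rho: "cmod ev = rho M"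
    using rho_eigenvector[OF M n] .
  then have v: "v \<in> carrier_vec n" "v \<noteq> 0\<^sub>v n" "map_mat complex_of_real M *\<^sub>v v = ev \<cdot>\<^sub>v v"
    using M unfolding eigenvector_def by auto
  define w where "w = map_vec cmod v"
  have w: "w \<in> carrier_vec n" using v by (simp add: w_def)
  have "w \<noteq> 0\<^sub>v n"
    using v(1,2) by (auto simp: w_def vec_eq_iff)
  moreover have "rho M * w $ i \<le> (M *\<^sub>v w) $ i" if i: "i < n" for i
  proof -
    have "rho M * w $ i = cmod ((map_mat complex_of_real M *\<^sub>v v) $ i)"
      using v i by (simp add: w_def rho norm_mult)
    also have "\<dots> \<le> (M *\<^sub>v w) $ i" unfolding w_def by (rule norm_mult_mat_vec_le[OF M M0 v(1) i])
    finally show ?thesis .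
  qed
  ultimately show ?thesis
    using that[OF w] w M by (auto simp: less_eq_vec_def w_def)
qed

lemma rho_le_if_mult_vec_le:
  fixes M :: "real mat"
  assumes M: "M \<in> carrier_mat n n" and n: "n > 0" and M0: "0\<^sub>m n n \<le> M"
    and x: "x \<in> carrier_vec n" and x_pos: "\<forall>i<n. 0 < x $ i" and Mx: "M *\<^sub>v x \<le> t \<cdot>\<^sub>v x"
  shows "rho M \<le> t"
proof -
  obtain ev v where ev: "eigenvector (map_mat complex_of_real M) v ev" and rho: "cmod ev = rho M"
    using rho_eigenvector[OF M n] .
  then have v: "v \<in> carrier_vec n" "v \<noteq> 0\<^sub>v n" "map_mat complex_of_real M *\<^sub>v v = ev \<cdot>\<^sub>v v"
    using M unfolding eigenvector_def by auto
  define ratio where "ratio i = cmod (v $ i) / x $ i" for i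
  define c where "c = Max (ratio ` {..<n})"
  have "c \<in> ratio ` {..<n}"
    unfolding c_def using n by (intro Max_in) auto
  then obtain i where i: "i < n" and ci: "c = ratio i" by auto
  have ratio_le: "ratio j \<le> c" if "j < n" for j
    using that by (simp add: c_def)
  obtain j where j: "j < n" "v $ j \<noteq> 0"
    using v(1,2) by (auto simp: vec_eq_iff)
  have "0 < ratio j" using j x_pos by (simp add: ratio_def)
  then have "0 < ratio i" using ratio_le[OF j(1)] ci by simp
  then have vi: "0 < cmod (v $ i)" using x_pos i by (simp add: ratio_def zero_less_divide_iff)
  have v_le: "map_vec cmod v \<le> c \<cdot>\<^sub>v x"
    using ratio_le x_pos v(1) x by (auto simp: less_eq_vec_def ratio_def field_simps)
  have "rho M * cmod (v $ i) = cmod ((map_mat complex_of_real M *\<^sub>v v) $ i)"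
    using v i by (simp add: rho norm_mult)
  also have "\<dots> \<le> (M *\<^sub>v map_vec cmod v) $ i" by (rule norm_mult_mat_vec_le[OF M M0 v(1) i])
  also have "\<dots> \<le> (M *\<^sub>v (c \<cdot>\<^sub>v x)) $ i"
    using mult_mat_vec_mono[OF M M0 _ _ v_le] v(1) x i M by (auto simp: less_eq_vec_def)
  also have "\<dots> = c * (M *\<^sub>v x) $ i" using M x i by (simp add: mult_mat_vec)
  also have "\<dots> \<le> c * (t * x $ i)"
    using Mx vi x_pos x i M ci by (intro mult_left_mono) (auto simp: less_eq_vec_def ratio_def)
  also have "\<dots> = t * cmod (v $ i)" using x_pos i by (auto simp: ci ratio_def)
  finally show ?thesis using vi by simp
qed

lemma smult_mat_mult_vec:
  assumes "A \<in> carrier_mat n m" and "v \<in> carrier_vec m"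
  shows "(c \<cdot>\<^sub>m A) *\<^sub>v v = c \<cdot>\<^sub>v (A *\<^sub>v v)"
  using assms by (intro eq_vecI) (auto simp: scalar_prod_def sum_distrib_left ac_simps)

lemma pow_mat_smult:
  fixes A :: "'a :: comm_semiring_1 mat"
  assumes A: "A \<in> carrier_mat n n"
  shows "(c \<cdot>\<^sub>m A) ^\<^sub>m k = c ^ k \<cdot>\<^sub>m A ^\<^sub>m k"
proof (induction k)
  case 0
  show ?case using A by auto
next
  case (Suc k)
  then show ?case using A by (auto simp: scalar_prod_def sum_distrib_left ac_simps)
qed

lemma rho_less_imp_pow_mat_bound:
  fixes M :: "real mat"
  assumes M: "M \<in> carrier_mat n n" and n: "n > 0" and r: "rho M < r"
  obtains C where "\<And>k i j. i < n \<Longrightarrow> j < n \<Longrightarrow> \<bar>(M ^\<^sub>m k) $$ (i, j)\<bar> \<le> C * r ^ k"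
proof -
  have r0: "0 < r" using rho_nonneg[OF M n] r by simp
  define Mc where "Mc = map_mat complex_of_real M"
  define Bc where "Bc = complex_of_real (1 / r) \<cdot>\<^sub>m Mc"
  have Mc: "Mc \<in> carrier_mat n n" and Bc: "Bc \<in> carrier_mat n n" using M by (auto simp: Mc_def Bc_def)
  have "spectral_radius Bc < 1"
  proof -
    obtain e where "e \<in> spectrum Bc" and sr: "spectral_radius Bc = cmod e"
      using spectral_radius_mem_max(1)[OF Bc n] by auto
    then obtain v where v: "v \<in> carrier_vec n" "v \<noteq> 0\<^sub>v n" "Bc *\<^sub>v v = e \<cdot>\<^sub>v v"
      using Bc unfolding spectrum_def eigenvalue_def eigenvector_def by auto
    have "Mc *\<^sub>v v = complex_of_real r \<cdot>\<^sub>v (Bc *\<^sub>v v)"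
      using Mc v(1) r0 by (simp add: Bc_def smult_mat_mult_vec smult_smult_assoc)
    then have "eigenvector Mc v (complex_of_real r * e)"
      using v Mc by (simp add: eigenvector_def smult_smult_assoc)
    then have "cmod (complex_of_real r * e) \<le> rho M"
      unfolding Mc_def by (rule eigenvalue_norm_le_rho[OF M n])
    then have "r * cmod e \<le> rho M" using r0 by (simp add: norm_mult)
    then have "r * cmod e < r * 1" using r by simp
    then show ?thesis using r0 sr by (simp only: mult_less_cancel_left_pos)
  qed
  then obtain C where C: "\<And>k. norm_bound (Bc ^\<^sub>m k) C"
    using spectral_radius_jnf_norm_bound_less_1_upper_triangular[OF Bc] by auto
  have "\<bar>(M ^\<^sub>m k) $$ (i, j)\<bar> \<le> C * r ^ k" if "i < n" "j < n" for k i j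
  proof -
    have "Bc ^\<^sub>m k = complex_of_real ((1 / r) ^ k) \<cdot>\<^sub>m map_mat complex_of_real (M ^\<^sub>m k)"
      unfolding Bc_def pow_mat_smult[OF Mc] unfolding Mc_def of_real_hom.mat_hom_pow[OF M] by simp
    then have "(1 / r) ^ k * \<bar>(M ^\<^sub>m k) $$ (i, j)\<bar> \<le> C"
      using C[of k] that M r0 by (auto simp: norm_bound_def norm_mult norm_power norm_divide)
    then show ?thesis using r0 by (simp add: field_simps)
  qed
  then show ?thesis using that by blast
qed

lemma power_bound_imp_le:
  fixes s t a D :: real
  assumes a: "0 < a" and t: "0 \<le> t" and bound: "\<And>k. s ^ k * a \<le> D * t ^ k"
  shows "s \<le> t"
proof (rule ccontr)
  assume "\<not> s \<le> t"
  then have ts: "t < s" by simp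
  show False
  proof (cases "t = 0")
    case True
    then have "0 < s * a" using a ts by simp
    then show False using bound[of 1] True by simp
  next
    case False
    then have t0: "0 < t" using t by simp
    obtain k where "D / a < (s / t) ^ k"
      using real_arch_pow[of "s / t" "D / a"] ts t0 by auto
    then have "D * t ^ k < s ^ k * a"
      using a t0 by (simp add: field_simps power_divide)
    then show False using bound[of k] by simp
  qed
qed

lemma pow_mat_mult_vec_ge:
  fixes M :: "real mat"
  assumes M: "M \<in> carrier_mat n n" and M0: "0\<^sub>m n n \<le> M" and w: "w \<in> carrier_vec n"
    and t: "0 \<le> t" and Mw: "t \<cdot>\<^sub>v w \<le> M *\<^sub>v w"
  shows "t ^ k \<cdot>\<^sub>v w \<le> M ^\<^sub>m k *\<^sub>v w"
proof (induction k)
  case 0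
  show ?case using M w by simp
next
  case (Suc k)
  have Mk: "M ^\<^sub>m k \<in> carrier_mat n n" using M by simp
  have "t ^ Suc k \<cdot>\<^sub>v w = t \<cdot>\<^sub>v (t ^ k \<cdot>\<^sub>v w)" by (simp add: smult_smult_assoc)
  also have "\<dots> \<le> t \<cdot>\<^sub>v (M ^\<^sub>m k *\<^sub>v w)"
    using Suc.IH t w Mk by (auto simp: less_eq_vec_def intro: mult_left_mono)
  also have "\<dots> = M ^\<^sub>m k *\<^sub>v (t \<cdot>\<^sub>v w)" using Mk w by (simp add: mult_mat_vec)
  also have "\<dots> \<le> M ^\<^sub>m k *\<^sub>v (M *\<^sub>v w)"
    using mult_mat_vec_mono[OF Mk pow_mat_nonneg[OF M M0] _ _ Mw] M w by simp
  also have "\<dots> = M ^\<^sub>m Suc k *\<^sub>v w" using M w by (simp add: assoc_mult_mat_vec[of _ n n _ n])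
  finally show ?case .
qed

lemma rho_ge_if_le_mult_vec:
  fixes M :: "real mat"
  assumes M: "M \<in> carrier_mat n n" and n: "n > 0" and M0: "0\<^sub>m n n \<le> M"
    and w: "w \<in> carrier_vec n" and w0: "0\<^sub>v n \<le> w" and w_nz: "w \<noteq> 0\<^sub>v n"
    and Mw: "t \<cdot>\<^sub>v w \<le> M *\<^sub>v w"
  shows "t \<le> rho M"
proof (rule ccontr)
  assume "\<not> t \<le> rho M"
  then have lt: "rho M < t" by simp
  have rho0: "0 \<le> rho M" by (rule rho_nonneg[OF M n])
  define r where "r = (rho M + t) / 2"
  have r: "rho M < r" "r < t" "0 \<le> r" using lt rho0 by (auto simp: r_def)
  obtain C where C: "\<And>k i j. i < n \<Longrightarrow> j < n \<Longrightarrow> \<bar>(M ^\<^sub>m k) $$ (i, j)\<bar> \<le> C * r ^ k"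
    using rho_less_imp_pow_mat_bound[OF M n r(1)] by blast
  have w_nonneg: "0 \<le> w $ j" if "j < n" for j using w0 w that by (auto simp: less_eq_vec_def)
  obtain i where i: "i < n" "0 < w $ i"
    using w_nz w w_nonneg by (force simp: vec_eq_iff less_le)
  have "t ^ k * w $ i \<le> (C * (\<Sum>j<n. w $ j)) * r ^ k" for k
  proof -
    have "t ^ k * w $ i \<le> (M ^\<^sub>m k *\<^sub>v w) $ i"
      using pow_mat_mult_vec_ge[OF M M0 w _ Mw, of k] lt rho0 w M i by (auto simp: less_eq_vec_def)
    also have "\<dots> \<le> (\<Sum>j<n. C * r ^ k * w $ j)"
      unfolding index_mult_mat_vec_sum[OF pow_carrier_mat[OF M] w i(1)]
    proof (rule sum_mono)
      fix j assume "j \<in> {..<n}"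
      then have "(M ^\<^sub>m k) $$ (i, j) \<le> C * r ^ k" and "0 \<le> w $ j"
        using C[of i j k] i w_nonneg by auto
      then show "(M ^\<^sub>m k) $$ (i, j) * w $ j \<le> C * r ^ k * w $ j" by (rule mult_right_mono)
    qed
    also have "\<dots> = (C * (\<Sum>j<n. w $ j)) * r ^ k" by (simp add: sum_distrib_left ac_simps)
    finally show ?thesis .
  qed
  then have "t \<le> r" by (rule power_bound_imp_le[OF i(2) r(3)])
  then show False using r by simp
qed

lemma rho_mono:
  fixes M N :: "real mat"
  assumes M: "M \<in> carrier_mat n n" and N: "N \<in> carrier_mat n n" and n: "n > 0"
    and M0: "0\<^sub>m n n \<le> M" and MN: "M \<le> N"
  shows "rho M \<le> rho N"
proof -
  obtain w where w: "w \<in> carrier_vec n" "0\<^sub>v n \<le> w" "w \<noteq> 0\<^sub>v n" and Mw: "rho M \<cdot>\<^sub>v w \<le> M *\<^sub>v w"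
    using nonneg_mat_rho_subeigenvector[OF M n M0] by blast
  have N0: "0\<^sub>m n n \<le> N" using M0 MN by (rule order.trans)
  have "rho M \<cdot>\<^sub>v w \<le> N *\<^sub>v w" using Mw mult_mat_vec_mono_left[OF M N MN w(1,2)] by (rule order.trans)
  then show ?thesis by (rule rho_ge_if_le_mult_vec[OF N n N0 w])
qed

lemma rho_less_1_imp_pow_mat_mult_vec_tendsto_0:
  fixes M :: "real mat"
  assumes M: "M \<in> carrier_mat n n" and n: "n > 0" and rho: "rho M < 1"
    and g: "g \<in> carrier_vec n" and i: "i < n"
  shows "(\<lambda>k. (M ^\<^sub>m k *\<^sub>v g) $ i) \<longlonglongrightarrow> 0"
proof -
  define r where "r = (rho M + 1) / 2"
  have r: "rho M < r" "r < 1" "0 \<le> r" using rho rho_nonneg[OF M n] by (auto simp: r_def)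
  obtain C where C: "\<And>k i j. i < n \<Longrightarrow> j < n \<Longrightarrow> \<bar>(M ^\<^sub>m k) $$ (i, j)\<bar> \<le> C * r ^ k"
    using rho_less_imp_pow_mat_bound[OF M n r(1)] by blast
  have bound: "\<bar>(M ^\<^sub>m k *\<^sub>v g) $ i\<bar> \<le> r ^ k * (\<Sum>j<n. C * \<bar>g $ j\<bar>)" for k
  proof -
    have "\<bar>(M ^\<^sub>m k *\<^sub>v g) $ i\<bar> \<le> (\<Sum>j<n. \<bar>(M ^\<^sub>m k) $$ (i, j)\<bar> * \<bar>g $ j\<bar>)"
      unfolding index_mult_mat_vec_sum[OF pow_carrier_mat[OF M] g i]
      by (rule order.trans[OF sum_abs]) (simp add: abs_mult)
    also have "\<dots> \<le> (\<Sum>j<n. C * r ^ k * \<bar>g $ j\<bar>)"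
      using C i by (intro sum_mono mult_right_mono) auto
    finally show ?thesis by (simp add: sum_distrib_left ac_simps)
  qed
  have "(\<lambda>k. r ^ k * (\<Sum>j<n. C * \<bar>g $ j\<bar>)) \<longlonglongrightarrow> 0"
    using r by (intro tendsto_mult_left_zero LIMSEQ_power_zero) auto
  then show ?thesis
    by (rule tendsto_0_le[where K = 1]) (auto intro: always_eventually order.trans[OF bound abs_ge_self])
qed

section \<open>Block companion matrices\<close>

abbreviation companion_mat :: "nat \<Rightarrow> 'a :: {zero, one} mat \<Rightarrow> 'a mat \<Rightarrow> 'a mat" where
  "companion_mat n X Y \<equiv> four_block_mat X Y (1\<^sub>m n) (0\<^sub>m n n)"

lemma companion_mat_carrier:
  "X \<in> carrier_mat n n \<Longrightarrow> Y \<in> carrier_mat n n \<Longrightarrow> companion_mat n X Y \<in> carrier_mat (n + n) (n + n)"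
  by (rule four_block_carrier_mat) auto

lemma companion_mat_mult_vec:
  fixes X Y :: "'a :: comm_ring_1 mat"
  assumes X: "X \<in> carrier_mat n n" and Y: "Y \<in> carrier_mat n n"
    and u: "u \<in> carrier_vec n" and v: "v \<in> carrier_vec n"
  shows "companion_mat n X Y *\<^sub>v (u @\<^sub>v v) = (X *\<^sub>v u + Y *\<^sub>v v) @\<^sub>v u"
proof -
  have "1\<^sub>m n *\<^sub>v u + 0\<^sub>m n n *\<^sub>v v = u"
    using u v by (intro eq_vecI) (auto simp: scalar_prod_def)
  then show ?thesis by (subst four_block_mat_mult_vec[OF X Y _ _ u v]) auto
qed

lemma companion_mat_mono:
  fixes X Y X' Y' :: "real mat"
  assumes "X \<in> carrier_mat n n" "Y \<in> carrier_mat n n" "X' \<in> carrier_mat n n" "Y' \<in> carrier_mat n n"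
    and "X \<le> X'" "Y \<le> Y'"
  shows "companion_mat n X Y \<le> companion_mat n X' Y'"
  using assms by (auto simp: less_eq_mat_def)

lemma companion_mat_nonneg:
  fixes X Y :: "real mat"
  assumes "X \<in> carrier_mat n n" "Y \<in> carrier_mat n n" and "0\<^sub>m n n \<le> X" "0\<^sub>m n n \<le> Y"
  shows "0\<^sub>m (n + n) (n + n) \<le> companion_mat n X Y"
  using assms by (auto simp: less_eq_mat_def)

lemma rho_companion_mat_le:
  fixes X Y :: "real mat"
  assumes X: "X \<in> carrier_mat n n" and Y: "Y \<in> carrier_mat n n" and n: "n > 0"
    and X0: "0\<^sub>m n n \<le> X" and Y0: "0\<^sub>m n n \<le> Y"
    and x: "x \<in> carrier_vec n" and x_pos: "\<forall>i<n. 0 < x $ i" and s: "0 < s"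
    and super: "X *\<^sub>v x + (1 / s) \<cdot>\<^sub>v (Y *\<^sub>v x) \<le> s \<cdot>\<^sub>v x"
  shows "rho (companion_mat n X Y) \<le> s"
proof -
  define z where "z = x @\<^sub>v (1 / s) \<cdot>\<^sub>v x"
  have z: "z \<in> carrier_vec (n + n)" using x by (simp add: z_def)
  have "companion_mat n X Y *\<^sub>v z = (X *\<^sub>v x + (1 / s) \<cdot>\<^sub>v (Y *\<^sub>v x)) @\<^sub>v x"
    using companion_mat_mult_vec[OF X Y x, of "(1 / s) \<cdot>\<^sub>v x"] x Y by (simp add: z_def mult_mat_vec)
  also have "\<dots> \<le> (s \<cdot>\<^sub>v x) @\<^sub>v x"
    using super X Y x by (simp add: append_vec_le[of _ n])
  also have "\<dots> = s \<cdot>\<^sub>v z" using x s by (intro eq_vecI) (auto simp: z_def)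
  finally have "companion_mat n X Y *\<^sub>v z \<le> s \<cdot>\<^sub>v z" .
  moreover have "\<forall>i<n + n. 0 < z $ i" using x x_pos s by (auto simp: z_def)
  ultimately show ?thesis
    using rho_le_if_mult_vec_le[OF companion_mat_carrier[OF X Y] _ companion_mat_nonneg[OF X Y X0 Y0] z] n
    by simp
qed

lemma rho_companion_mat_less_1:
  fixes X Y :: "real mat"
  assumes X: "X \<in> carrier_mat n n" and Y: "Y \<in> carrier_mat n n" and n: "n > 0"
    and X0: "0\<^sub>m n n \<le> X" and Y0: "0\<^sub>m n n \<le> Y"
    and u: "u \<in> carrier_vec n" and u_pos: "\<forall>i<n. 0 < u $ i"
    and less: "\<forall>i<n. (X *\<^sub>v u + Y *\<^sub>v u) $ i < u $ i"
  shows "rho (companion_mat n X Y) < 1"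
proof -
  define ratio where "ratio i = (X *\<^sub>v u + Y *\<^sub>v u) $ i / u $ i" for i
  define p where "p = max 0 (Max (ratio ` {..<n}))"
  have "Max (ratio ` {..<n}) \<in> ratio ` {..<n}" using n by (intro Max_in) auto
  then have p1: "p < 1" using less u_pos by (auto simp: p_def ratio_def)
  have p0: "0 \<le> p" by (simp add: p_def)
  define c where "c = (1 + p) / 2"
  have c: "0 < c" "c < 1" using p0 p1 by (auto simp: c_def)
  have "c * c - p = (1 - p)\<^sup>2 / 4" by (simp add: c_def power2_eq_square field_simps)
  then have pc: "p \<le> c * c" using zero_le_power2[of "1 - p"] by linarith
  have "(X *\<^sub>v u) $ i + (1 / c) * (Y *\<^sub>v u) $ i \<le> c * u $ i" if i: "i < n" for i
  proof -
    have Xu: "0 \<le> (X *\<^sub>v u) $ i"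
      using mult_mat_vec_nonneg[OF X X0 u] u_pos u X i by (auto simp: less_eq_vec_def less_imp_le)
    have "ratio i \<le> Max (ratio ` {..<n})" using i by (intro Max_ge) auto
    then have "ratio i \<le> p" by (simp add: p_def)
    then have sum_le: "(X *\<^sub>v u) $ i + (Y *\<^sub>v u) $ i \<le> c * c * u $ i"
      using pc u_pos i X Y u by (auto simp: ratio_def divide_le_eq intro: order.trans)
    have "(X *\<^sub>v u) $ i + (1 / c) * (Y *\<^sub>v u) $ i \<le> (1 / c) * ((X *\<^sub>v u) $ i + (Y *\<^sub>v u) $ i)"
      using Xu c by (simp add: field_simps mult_left_le_one_le)
    also have "\<dots> \<le> (1 / c) * (c * c * u $ i)" using sum_le c by (intro mult_left_mono) auto
    also have "\<dots> = c * u $ i" using c by simp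
    finally show ?thesis .
  qed
  then have "X *\<^sub>v u + (1 / c) \<cdot>\<^sub>v (Y *\<^sub>v u) \<le> c \<cdot>\<^sub>v u" using X Y u by (simp add: less_eq_vec_def)
  then have "rho (companion_mat n X Y) \<le> c" by (rule rho_companion_mat_le[OF X Y n X0 Y0 u u_pos c(1)])
  then show ?thesis using c by simp
qed

lemma rho_less_1_if_rho_companion_mat_less:
  fixes X Y :: "real mat"
  assumes X: "X \<in> carrier_mat n n" and Y: "Y \<in> carrier_mat n n" and n: "n > 0"
    and X0: "0\<^sub>m n n \<le> X" and Y0: "0\<^sub>m n n \<le> Y"
    and s: "0 < s" and rho: "rho (companion_mat n X Y) < s"
  shows "rho ((1 / s) \<cdot>\<^sub>m X + (1 / s\<^sup>2) \<cdot>\<^sub>m Y) < 1"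
proof (rule ccontr)
  define B where "B = (1 / s) \<cdot>\<^sub>m X + (1 / s\<^sup>2) \<cdot>\<^sub>m Y"
  have B: "B \<in> carrier_mat n n" using X Y by (simp add: B_def)
  have B0: "0\<^sub>m n n \<le> B" using X0 Y0 X Y s by (auto simp: B_def less_eq_mat_def)
  assume "\<not> rho B < 1"
  then have rho_B: "1 \<le> rho B" unfolding B_def by simp
  obtain b where b: "b \<in> carrier_vec n" "0\<^sub>v n \<le> b" "b \<noteq> 0\<^sub>v n" and Bb: "rho B \<cdot>\<^sub>v b \<le> B *\<^sub>v b"
    using nonneg_mat_rho_subeigenvector[OF B n B0] by blast
  define z where "z = b @\<^sub>v (1 / s) \<cdot>\<^sub>v b"
  have z: "z \<in> carrier_vec (n + n)" using b by (simp add: z_def)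
  have "s \<cdot>\<^sub>v z \<le> companion_mat n X Y *\<^sub>v z"
  proof -
    have "s * b $ i \<le> (X *\<^sub>v b) $ i + (1 / s) * (Y *\<^sub>v b) $ i" if i: "i < n" for i
    proof -
      have "1 * b $ i \<le> rho B * b $ i"
        using rho_B b i by (intro mult_right_mono) (auto simp: less_eq_vec_def)
      also have "\<dots> \<le> (B *\<^sub>v b) $ i" using Bb b B i by (auto simp: less_eq_vec_def)
      also have "\<dots> = (1 / s) * (X *\<^sub>v b) $ i + (1 / s\<^sup>2) * (Y *\<^sub>v b) $ i"
        using X Y b i by (simp add: B_def add_mult_distrib_mat_vec[of _ n n] smult_mat_mult_vec)
      finally have "b $ i \<le> (1 / s) * (X *\<^sub>v b) $ i + (1 / s\<^sup>2) * (Y *\<^sub>v b) $ i" by simp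
      then show ?thesis using s by (simp add: field_simps power2_eq_square)
    qed
    then have "s \<cdot>\<^sub>v b \<le> X *\<^sub>v b + (1 / s) \<cdot>\<^sub>v (Y *\<^sub>v b)" using X Y b by (simp add: less_eq_vec_def)
    moreover have "s \<cdot>\<^sub>v z = (s \<cdot>\<^sub>v b) @\<^sub>v b" using b s by (intro eq_vecI) (auto simp: z_def)
    moreover have "companion_mat n X Y *\<^sub>v z = (X *\<^sub>v b + (1 / s) \<cdot>\<^sub>v (Y *\<^sub>v b)) @\<^sub>v b"
      using companion_mat_mult_vec[OF X Y b(1), of "(1 / s) \<cdot>\<^sub>v b"] b Y by (simp add: z_def mult_mat_vec)
    ultimately show ?thesis using X Y b by (simp add: append_vec_le[of _ n])
  qed
  moreover have "0\<^sub>v (n + n) \<le> z" "z \<noteq> 0\<^sub>v (n + n)"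
    using b s by (auto simp: z_def less_eq_vec_def vec_eq_iff)
  ultimately have "s \<le> rho (companion_mat n X Y)"
    using rho_ge_if_le_mult_vec[OF companion_mat_carrier[OF X Y] _ companion_mat_nonneg[OF X Y X0 Y0] z] n
    by simp
  then show False using rho by simp
qed

section \<open>Double splittings\<close>

lemma double_regular_splitting_imp_weak:
  assumes "double_regular_splitting n A P R S Pinv"
  shows "double_weak_regular_splitting n A P R S Pinv"
  using assms mult_mat_nonneg[of Pinv n n R n] mult_mat_nonpos[of Pinv n n S n]
  unfolding double_regular_splitting_def double_weak_regular_splitting_def is_inverse_mat_def
  by auto

lemma diff_add_mult_mat_vec:
  fixes P R S :: "'a :: comm_ring mat"
  assumes "P \<in> carrier_mat n n" "R \<in> carrier_mat n n" "S \<in> carrier_mat n n" "x \<in> carrier_vec n"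
  shows "(P - R + S) *\<^sub>v x = P *\<^sub>v x - R *\<^sub>v x + S *\<^sub>v x"
proof -
  have "(P - R + S) *\<^sub>v x = (P - R) *\<^sub>v x + S *\<^sub>v x"
    by (rule add_mult_distrib_mat_vec) (use assms in auto)
  then show ?thesis using minus_mult_distrib_mat_vec[of P n n R x] assms by simp
qed

lemma splitting_inverse_mult_vec:
  fixes A P R S Pinv :: "real mat"
  assumes inv: "is_inverse_mat n P Pinv" and A: "A = P - R + S"
    and R: "R \<in> carrier_mat n n" and S: "S \<in> carrier_mat n n" and x: "x \<in> carrier_vec n"
  shows "Pinv *\<^sub>v (A *\<^sub>v x) = x - (Pinv * R) *\<^sub>v x + (Pinv * S) *\<^sub>v x"
proof -
  have P: "P \<in> carrier_mat n n" and Pinv: "Pinv \<in> carrier_mat n n" and "Pinv * P = 1\<^sub>m n"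
    using inv unfolding is_inverse_mat_def by auto
  then have "Pinv *\<^sub>v (P *\<^sub>v x) = x" using x by (simp flip: assoc_mult_mat_vec[OF Pinv P x])
  moreover have "A *\<^sub>v x = P *\<^sub>v x - R *\<^sub>v x + S *\<^sub>v x"
    unfolding A by (rule diff_add_mult_mat_vec[OF P R S x])
  ultimately show ?thesis
    using P Pinv R S x
    by (simp add: mult_add_distrib_mat_vec[of _ n n] mult_minus_distrib_mat_vec[of _ n n]
        assoc_mult_mat_vec[of _ n n _ n])
qed

lemma nonneg_inverse_mult_ones_pos:
  fixes M Q :: "real mat"
  assumes inv: "is_inverse_mat n M Q" and Q0: "0\<^sub>m n n \<le> Q" and i: "i < n"
  shows "0 < (Q *\<^sub>v vec n (\<lambda>_. 1)) $ i"
proof -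
  have Q: "Q \<in> carrier_mat n n" and M: "M \<in> carrier_mat n n" and QM: "Q * M = 1\<^sub>m n"
    using inv unfolding is_inverse_mat_def by auto
  have Q_nonneg: "0 \<le> Q $$ (i, j)" if "j < n" for j using Q0 Q i that by (auto simp: less_eq_mat_def)
  have row_sum: "(Q *\<^sub>v vec n (\<lambda>_. 1)) $ i = (\<Sum>j<n. Q $$ (i, j))"
    using index_mult_mat_vec_sum[OF Q _ i, of "vec n (\<lambda>_. 1)"] by simp
  have "(\<Sum>j<n. Q $$ (i, j)) \<noteq> 0"
  proof
    assume "(\<Sum>j<n. Q $$ (i, j)) = 0"
    then have "\<forall>j\<in>{..<n}. Q $$ (i, j) = 0" using Q_nonneg by (subst (asm) sum_nonneg_eq_0_iff) auto
    then have "(Q * M) $$ (i, i) = 0"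
      using Q M i by (simp add: scalar_prod_def)
    then show False using QM i by simp
  qed
  moreover have "0 \<le> (\<Sum>j<n. Q $$ (i, j))" using Q_nonneg by (auto intro: sum_nonneg)
  ultimately show ?thesis unfolding row_sum by simp
qed

lemma rho_weak_regular_splitting_companion_less_1:
  fixes A P R S Pinv :: "real mat"
  assumes n: "n > 0" and mono: "monotone_mat n A"
    and split: "double_weak_regular_splitting n A P R S Pinv"
  shows "rho (companion_mat n (Pinv * R) (- (Pinv * S))) < 1"
proof -
  obtain Ainv where Ainv: "is_inverse_mat n A Ainv" and Ainv0: "0\<^sub>m n n \<le> Ainv"
    using mono unfolding monotone_mat_def by blast
  have R: "R \<in> carrier_mat n n" and S: "S \<in> carrier_mat n n" and inv: "is_inverse_mat n P Pinv"
    and A: "A = P - R + S" and Pinv0: "0\<^sub>m n n \<le> Pinv"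
    and X0: "0\<^sub>m n n \<le> Pinv * R" and PS: "Pinv * S \<le> 0\<^sub>m n n"
    using split unfolding double_weak_regular_splitting_def by auto
  have Pinv: "Pinv \<in> carrier_mat n n" and Ac: "A \<in> carrier_mat n n" and Ainvc: "Ainv \<in> carrier_mat n n"
    and AAinv: "A * Ainv = 1\<^sub>m n"
    using inv Ainv unfolding is_inverse_mat_def by auto
  have Y0: "0\<^sub>m n n \<le> - (Pinv * S)" by (rule uminus_mat_nonneg[OF PS])
  define one where "one = vec n (\<lambda>_. 1 :: real)"
  have one: "one \<in> carrier_vec n" by (simp add: one_def)
  define u where "u = Ainv *\<^sub>v one"
  have u: "u \<in> carrier_vec n" using mult_mat_vec_carrier[OF Ainvc one] by (simp add: u_def)
  have u_pos: "\<forall>i<n. 0 < u $ i"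
    using nonneg_inverse_mult_ones_pos[OF Ainv Ainv0] by (simp add: u_def one_def)
  have "A *\<^sub>v u = one" using one Ac Ainvc AAinv by (simp add: u_def flip: assoc_mult_mat_vec)
  then have "Pinv *\<^sub>v one = u - (Pinv * R) *\<^sub>v u + (Pinv * S) *\<^sub>v u"
    using splitting_inverse_mult_vec[OF inv A R S u] by simp
  then have "(Pinv * R *\<^sub>v u + - (Pinv * S) *\<^sub>v u) $ i = u $ i - (Pinv *\<^sub>v one) $ i" if "i < n" for i
    using that u Pinv R S by simp
  moreover have "0 < (Pinv *\<^sub>v one) $ i" if "i < n" for i
    using nonneg_inverse_mult_ones_pos[OF inv Pinv0 that] by (simp add: one_def)
  ultimately have "\<forall>i<n. (Pinv * R *\<^sub>v u + - (Pinv * S) *\<^sub>v u) $ i < u $ i" by simp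
  then show ?thesis
    using rho_companion_mat_less_1[OF _ _ n X0 Y0 u u_pos] Pinv R S by simp
qed

lemma pow_mat_Suc_left:
  assumes A: "A \<in> carrier_mat n n"
  shows "A ^\<^sub>m Suc k = A * A ^\<^sub>m k"
proof (induction k)
  case 0
  show ?case using A by simp
next
  case (Suc k)
  have "A ^\<^sub>m Suc (Suc k) = (A * A ^\<^sub>m k) * A" using Suc by simp
  also have "\<dots> = A * A ^\<^sub>m Suc k" using A by (simp add: assoc_mult_mat[of _ n n _ n _ n])
  finally show ?case .
qed

lemma neumann_partial_sum_telescope:
  fixes B :: "real mat" and m :: nat
  assumes B: "B \<in> carrier_mat n n" and g: "g \<in> carrier_vec n"
  defines "x \<equiv> vec n (\<lambda>i. \<Sum>k<m. (B ^\<^sub>m k *\<^sub>v g) $ i)"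
  shows "x - B *\<^sub>v x = g - B ^\<^sub>m m *\<^sub>v g"
proof -
  define e where "e k = B ^\<^sub>m k *\<^sub>v g" for k
  have e: "e k \<in> carrier_vec n" for k
    unfolding e_def by (rule mult_mat_vec_carrier[OF pow_carrier_mat[OF B] g])
  have e_Suc: "e (Suc k) = B *\<^sub>v e k" for k
    unfolding e_def pow_mat_Suc_left[OF B] using B g by (simp add: assoc_mult_mat_vec[of _ n n _ n])
  have x: "x \<in> carrier_vec n" by (simp add: x_def)
  have Bx: "(B *\<^sub>v x) $ i = (\<Sum>k<m. e (Suc k) $ i)" if i: "i < n" for i
  proof -
    have "(B *\<^sub>v x) $ i = (\<Sum>j<n. B $$ (i, j) * (\<Sum>k<m. e k $ j))"
      using index_mult_mat_vec_sum[OF B x i] by (simp add: x_def e_def)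
    also have "\<dots> = (\<Sum>k<m. \<Sum>j<n. B $$ (i, j) * e k $ j)"
      by (simp add: sum_distrib_left sum.swap[of _ "{..<n}"])
    also have "\<dots> = (\<Sum>k<m. e (Suc k) $ i)" unfolding e_Suc using index_mult_mat_vec_sum[OF B e i] by simp
    finally show ?thesis .
  qed
  show ?thesis
  proof (rule eq_vecI)
    fix i assume "i < dim_vec (g - B ^\<^sub>m m *\<^sub>v g)"
    then have i: "i < n" using g B by simp
    have "(x - B *\<^sub>v x) $ i = x $ i - (B *\<^sub>v x) $ i" using i B x by simp
    also have "\<dots> = (\<Sum>k<m. e k $ i - e (Suc k) $ i)"
      unfolding Bx[OF i] using i by (simp add: x_def e_def sum_subtractf)
    also have "\<dots> = e 0 $ i - e m $ i" by (rule sum_lessThan_telescope')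
    finally show "(x - B *\<^sub>v x) $ i = (g - B ^\<^sub>m m *\<^sub>v g) $ i" using i g e B by (simp add: e_def)
  qed (use g e[of m] B in \<open>simp add: e_def\<close>)
qed

lemma truncated_neumann_supervector:
  fixes B P :: "real mat"
  assumes B: "B \<in> carrier_mat n n" and n: "n > 0" and B0: "0\<^sub>m n n \<le> B" and rho: "rho B < 1"
    and P: "P \<in> carrier_mat n n" and g: "g \<in> carrier_vec n"
    and g_pos: "\<forall>i<n. 0 < g $ i" and Pg_pos: "\<forall>i<n. 0 < (P *\<^sub>v g) $ i"
  obtains x where "x \<in> carrier_vec n" "\<forall>i<n. 0 < x $ i" "B *\<^sub>v x \<le> x"
    "0\<^sub>v n \<le> P *\<^sub>v (x - B *\<^sub>v x)"
proof -
  define e where "e k = B ^\<^sub>m k *\<^sub>v g" for k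
  have e: "e k \<in> carrier_vec n" for k
    unfolding e_def by (rule mult_mat_vec_carrier[OF pow_carrier_mat[OF B] g])
  have e_nonneg: "0 \<le> e k $ i" if "i < n" for k i
    using mult_mat_vec_nonneg[OF pow_carrier_mat[OF B] pow_mat_nonneg[OF B B0] g, of k] g_pos g that
    by (auto simp: e_def less_eq_vec_def less_imp_le)
  have e_lim: "(\<lambda>k. e k $ i) \<longlonglongrightarrow> 0" if "i < n" for i
    unfolding e_def by (rule rho_less_1_imp_pow_mat_mult_vec_tendsto_0[OF B n rho g that])
  have Pe_lim: "(\<lambda>k. (P *\<^sub>v e k) $ i) \<longlonglongrightarrow> 0" if i: "i < n" for i
    unfolding index_mult_mat_vec_sum[OF P e i]
    by (rule tendsto_null_sum) (use e_lim in \<open>auto intro: tendsto_mult_right_zero\<close>)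
  have "\<forall>\<^sub>F k in sequentially. \<forall>i\<in>{..<n}. e k $ i < g $ i \<and> (P *\<^sub>v e k) $ i < (P *\<^sub>v g) $ i"
  proof (rule eventually_ball_finite)
    show "\<forall>i\<in>{..<n}. \<forall>\<^sub>F k in sequentially. e k $ i < g $ i \<and> (P *\<^sub>v e k) $ i < (P *\<^sub>v g) $ i"
    proof
      fix i assume "i \<in> {..<n}"
      then have i: "i < n" by simp
      show "\<forall>\<^sub>F k in sequentially. e k $ i < g $ i \<and> (P *\<^sub>v e k) $ i < (P *\<^sub>v g) $ i"
        using order_tendstoD(2)[OF e_lim[OF i]] order_tendstoD(2)[OF Pe_lim[OF i]] g_pos Pg_pos i
        by (auto intro: eventually_conj)
    qed
  qed simp
  then obtain m where m: "\<forall>i<n. e m $ i < g $ i \<and> (P *\<^sub>v e m) $ i < (P *\<^sub>v g) $ i"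
    unfolding eventually_sequentially by blast
  define x where "x = vec n (\<lambda>i. \<Sum>k<m. e k $ i)"
  have x: "x \<in> carrier_vec n" by (simp add: x_def)
  have x_nonneg: "0\<^sub>v n \<le> x" using e_nonneg by (auto simp: x_def less_eq_vec_def intro: sum_nonneg)
  have x_minus_Bx: "x - B *\<^sub>v x = g - e m"
    using neumann_partial_sum_telescope[OF B g, of m] by (simp add: x_def e_def)
  have diff_pos: "0 < (x - B *\<^sub>v x) $ i" if "i < n" for i
    using m that g e[of m] by (simp add: x_minus_Bx)
  show ?thesis
  proof
    show "\<forall>i<n. 0 < x $ i"
    proof (intro allI impI)
      fix i assume i: "i < n"
      have "0 \<le> (B *\<^sub>v x) $ i" using mult_mat_vec_nonneg[OF B B0 x x_nonneg] B i by (simp add: less_eq_vec_def)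
      then show "0 < x $ i" using diff_pos[OF i] B x i by simp
    qed
    show "B *\<^sub>v x \<le> x" using diff_pos B x by (auto simp: less_eq_vec_def less_imp_le)
    have "P *\<^sub>v (x - B *\<^sub>v x) = P *\<^sub>v g - P *\<^sub>v e m"
      unfolding x_minus_Bx by (rule mult_minus_distrib_mat_vec[OF P g e])
    then show "0\<^sub>v n \<le> P *\<^sub>v (x - B *\<^sub>v x)" using m P g e[of m] by (auto simp: less_eq_vec_def less_imp_le)
  qed (fact x)
qed

lemma regular_splitting_mult_vec_nonneg:
  fixes A P R S Pinv :: "real mat"
  assumes split: "double_regular_splitting n A P R S Pinv" and s: "0 < s" "s \<le> 1"
    and x: "x \<in> carrier_vec n" and x0: "0\<^sub>v n \<le> x"
    and Px: "0\<^sub>v n \<le> P *\<^sub>v (x - ((1 / s) \<cdot>\<^sub>m (Pinv * R) + (1 / s\<^sup>2) \<cdot>\<^sub>m (- (Pinv * S))) *\<^sub>v x)"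
  shows "0\<^sub>v n \<le> A *\<^sub>v x"
proof -
  have R: "R \<in> carrier_mat n n" and S: "S \<in> carrier_mat n n" and P: "P \<in> carrier_mat n n"
    and Pinv: "Pinv \<in> carrier_mat n n" and PPinv: "P * Pinv = 1\<^sub>m n" and A: "A = P - R + S"
    and R0: "0\<^sub>m n n \<le> R" and S0: "S \<le> 0\<^sub>m n n"
    using split unfolding double_regular_splitting_def is_inverse_mat_def by auto
  define B where "B = (1 / s) \<cdot>\<^sub>m (Pinv * R) + (1 / s\<^sup>2) \<cdot>\<^sub>m (- (Pinv * S))"
  have B: "B \<in> carrier_mat n n" using Pinv R S by (simp add: B_def)
  have Bx: "B *\<^sub>v x = (1 / s) \<cdot>\<^sub>v (Pinv *\<^sub>v (R *\<^sub>v x)) - (1 / s\<^sup>2) \<cdot>\<^sub>v (Pinv *\<^sub>v (S *\<^sub>v x))"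
    using Pinv R S x
    by (intro eq_vecI) (simp_all add: B_def add_mult_distrib_mat_vec[of _ n n] smult_mat_mult_vec[of _ n n]
        assoc_mult_mat_vec[of _ n n _ n])
  have cancel: "P *\<^sub>v (Pinv *\<^sub>v v) = v" if "v \<in> carrier_vec n" for v
    using P Pinv PPinv that by (simp flip: assoc_mult_mat_vec[of P n n Pinv n])
  have "P *\<^sub>v (B *\<^sub>v x) = (1 / s) \<cdot>\<^sub>v (R *\<^sub>v x) - (1 / s\<^sup>2) \<cdot>\<^sub>v (S *\<^sub>v x)"
    unfolding Bx using P Pinv R S x
    by (simp add: mult_minus_distrib_mat_vec[of _ n n] mult_mat_vec[of _ n n] cancel)
  then have PBx: "P *\<^sub>v (x - B *\<^sub>v x) = P *\<^sub>v x - ((1 / s) \<cdot>\<^sub>v (R *\<^sub>v x) - (1 / s\<^sup>2) \<cdot>\<^sub>v (S *\<^sub>v x))"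
    using mult_minus_distrib_mat_vec[OF P x mult_mat_vec_carrier[OF B x]] by simp
  have Ax: "A *\<^sub>v x = P *\<^sub>v x - R *\<^sub>v x + S *\<^sub>v x"
    unfolding A by (rule diff_add_mult_mat_vec[OF P R S x])
  have "0 \<le> (A *\<^sub>v x) $ i" if i: "i < n" for i
  proof -
    have "0 \<le> (P *\<^sub>v (x - B *\<^sub>v x)) $ i" using Px P i by (simp add: B_def less_eq_vec_def)
    moreover have "0 \<le> (R *\<^sub>v x) $ i" and "(S *\<^sub>v x) $ i \<le> 0"
      using mult_mat_vec_nonneg[OF R R0 x x0] mult_mat_vec_mono_left[OF S _ S0 x x0] R S x i
      by (auto simp: less_eq_vec_def)
    moreover have "1 \<le> 1 / s" "1 \<le> 1 / s\<^sup>2" using s by (simp_all add: power_le_one)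
    ultimately have "0 \<le> (P *\<^sub>v (x - B *\<^sub>v x)) $ i + (1 / s - 1) * (R *\<^sub>v x) $ i
        + (1 / s\<^sup>2 - 1) * (- (S *\<^sub>v x) $ i)"
      by (intro add_nonneg_nonneg mult_nonneg_nonneg) auto
    also have "\<dots> = (A *\<^sub>v x) $ i"
      unfolding PBx Ax using P R S x i by (simp add: algebra_simps)
    finally show ?thesis .
  qed
  then show ?thesis using A P R S x by (simp add: less_eq_vec_def)
qed

lemma weak_regular_splitting_mult_vec_le:
  fixes A P R S Pinv :: "real mat"
  assumes split: "double_weak_regular_splitting n A P R S Pinv"
    and x: "x \<in> carrier_vec n" and Ax: "0\<^sub>v n \<le> A *\<^sub>v x"
  shows "(Pinv * R) *\<^sub>v x + (- (Pinv * S)) *\<^sub>v x \<le> x"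
proof -
  have R: "R \<in> carrier_mat n n" and S: "S \<in> carrier_mat n n" and inv: "is_inverse_mat n P Pinv"
    and A: "A = P - R + S" and Pinv0: "0\<^sub>m n n \<le> Pinv" and Ac: "A \<in> carrier_mat n n"
    using split unfolding double_weak_regular_splitting_def by auto
  have Pinv: "Pinv \<in> carrier_mat n n" using inv unfolding is_inverse_mat_def by auto
  have "0\<^sub>v n \<le> Pinv *\<^sub>v (A *\<^sub>v x)"
    using mult_mat_vec_nonneg[OF Pinv Pinv0 _ Ax] Ac x by simp
  then show ?thesis
    unfolding splitting_inverse_mult_vec[OF inv A R S x] using Pinv R S x
    by (auto simp: less_eq_vec_def)
qed

lemma two_step_supervector:
  fixes X1 Y1 X2 Y2 :: "real mat"
  assumes X1: "X1 \<in> carrier_mat n n" and Y1: "Y1 \<in> carrier_mat n n"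
    and X2: "X2 \<in> carrier_mat n n" and Y2: "Y2 \<in> carrier_mat n n"
    and X1_0: "0\<^sub>m n n \<le> X1" and X2_0: "0\<^sub>m n n \<le> X2"
    and X2_Y2: "X2 \<le> Y2" and s: "0 < s" "s \<le> 1"
    and x: "x \<in> carrier_vec n" and x0: "0\<^sub>v n \<le> x"
    and super1: "X1 *\<^sub>v x + Y1 *\<^sub>v x \<le> x"
    and super2: "X2 *\<^sub>v x + (1 / s) \<cdot>\<^sub>v (Y2 *\<^sub>v x) \<le> s \<cdot>\<^sub>v x"
  shows "(X2 * X1 + Y2) *\<^sub>v x + (1 / s) \<cdot>\<^sub>v ((X2 * Y1) *\<^sub>v x) \<le> s \<cdot>\<^sub>v x"
proof -
  define a where "a = X1 *\<^sub>v x"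
  define b where "b = Y1 *\<^sub>v x"
  have a: "a \<in> carrier_vec n" and b: "b \<in> carrier_vec n" using X1 Y1 x by (auto simp: a_def b_def)
  have a0: "0\<^sub>v n \<le> a" unfolding a_def by (rule mult_mat_vec_nonneg[OF X1 X1_0 x x0])
  have ab_x: "a + b \<le> x" using super1 by (simp add: a_def b_def)
  have b_x: "b \<le> x" using ab_x a0 a b by (auto simp: less_eq_vec_def intro: order.trans[rotated])
  have "X2 *\<^sub>v (a + b) \<le> X2 *\<^sub>v x" using mult_mat_vec_mono[OF X2 X2_0 _ x ab_x] a b by simp
  then have X2_ab_le: "(X2 *\<^sub>v a) $ i + (X2 *\<^sub>v b) $ i \<le> (X2 *\<^sub>v x) $ i" if "i < n" for i
    using X2 a b that by (simp add: less_eq_vec_def mult_add_distrib_mat_vec[OF X2 a b])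
  have X2_b_le: "(X2 *\<^sub>v b) $ i \<le> (X2 *\<^sub>v x) $ i" if "i < n" for i
    using mult_mat_vec_mono[OF X2 X2_0 b x b_x] X2 that by (simp add: less_eq_vec_def)
  have X2_le_Y2: "(X2 *\<^sub>v x) $ i \<le> (Y2 *\<^sub>v x) $ i" if "i < n" for i
    using mult_mat_vec_mono_left[OF X2 Y2 X2_Y2 x x0] X2 that by (simp add: less_eq_vec_def)
  have super2_at: "(X2 *\<^sub>v x) $ i + (1 / s) * (Y2 *\<^sub>v x) $ i \<le> s * x $ i" if "i < n" for i
    using super2 X2 Y2 x that by (simp add: less_eq_vec_def)
  have "(X2 *\<^sub>v a) $ i + (Y2 *\<^sub>v x) $ i + (1 / s) * (X2 *\<^sub>v b) $ i \<le> s * x $ i" if i: "i < n" for i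
  proof -
    have "s * ((X2 *\<^sub>v a) $ i + (Y2 *\<^sub>v x) $ i + (1 / s) * (X2 *\<^sub>v b) $ i)
        = s * ((X2 *\<^sub>v a) $ i + (X2 *\<^sub>v b) $ i) + (1 - s) * (X2 *\<^sub>v b) $ i + s * (Y2 *\<^sub>v x) $ i"
      using s by (simp add: field_simps)
    also have "\<dots> \<le> s * (X2 *\<^sub>v x) $ i + (1 - s) * (Y2 *\<^sub>v x) $ i + s * (Y2 *\<^sub>v x) $ i"
      using X2_ab_le[OF i] order.trans[OF X2_b_le[OF i] X2_le_Y2[OF i]] s
      by (intro add_mono mult_left_mono order_refl) auto
    also have "\<dots> = s * ((X2 *\<^sub>v x) $ i + (1 / s) * (Y2 *\<^sub>v x) $ i)" using s by (simp add: field_simps)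
    also have "\<dots> \<le> s * (s * x $ i)" using super2_at[OF i] s by (intro mult_left_mono) auto
    finally show ?thesis using s by (simp add: mult_le_cancel_left_pos)
  qed
  moreover have "(X2 * X1 + Y2) *\<^sub>v x = X2 *\<^sub>v a + Y2 *\<^sub>v x" "(X2 * Y1) *\<^sub>v x = X2 *\<^sub>v b"
    using X1 Y1 X2 Y2 x by (simp_all add: a_def b_def add_mult_distrib_mat_vec[of _ n n] assoc_mult_mat_vec[of _ n n _ n])
  ultimately show ?thesis using X2 Y2 x a b by (simp add: less_eq_vec_def)
qed

lemma rho_weak_regular_splittings_companion_mono:
  fixes P1 R1 S1 P1i P2 R2 S2 P2i :: "real mat"
  assumes n: "n > 0"
    and split1: "double_weak_regular_splitting n A1 P1 R1 S1 P1i"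
    and split2: "double_weak_regular_splitting n A2 P2 R2 S2 P2i"
    and R_le: "P2i * R2 \<le> P1i * R1" and S_le: "P1i * S1 \<le> P2i * S2"
  shows "rho (companion_mat n (P2i * R2) (- (P2i * S2))) \<le> rho (companion_mat n (P1i * R1) (- (P1i * S1)))"
proof -
  have X1: "P1i * R1 \<in> carrier_mat n n" and Y1: "- (P1i * S1) \<in> carrier_mat n n"
    using split1 unfolding double_weak_regular_splitting_def is_inverse_mat_def by auto
  have X2: "P2i * R2 \<in> carrier_mat n n" and Y2: "- (P2i * S2) \<in> carrier_mat n n"
    and X2_0: "0\<^sub>m n n \<le> P2i * R2" and PS2: "P2i * S2 \<le> 0\<^sub>m n n"
    using split2 unfolding double_weak_regular_splitting_def is_inverse_mat_def by auto
  show ?thesis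
    by (rule rho_mono[OF companion_mat_carrier[OF X2 Y2] companion_mat_carrier[OF X1 Y1] _
        companion_mat_nonneg[OF X2 Y2 X2_0 uminus_mat_nonneg[OF PS2]]
        companion_mat_mono[OF X2 Y2 X1 Y1 R_le uminus_mat_mono[OF S_le]]])
      (use n in simp)
qed

lemma splittings_common_supervector:
  fixes A P1 R1 S1 P1i P2 R2 S2 P2i :: "real mat"
  assumes n: "n > 0"
    and split1: "double_weak_regular_splitting n A P1 R1 S1 P1i"
    and split2: "double_regular_splitting n A P2 R2 S2 P2i"
    and rho: "rho (companion_mat n (P2i * R2) (- (P2i * S2))) < s" and s1: "s \<le> 1"
  obtains x where "x \<in> carrier_vec n" "\<forall>i<n. 0 < x $ i"
    "(P1i * R1) *\<^sub>v x + (- (P1i * S1)) *\<^sub>v x \<le> x"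
    "(P2i * R2) *\<^sub>v x + (1 / s) \<cdot>\<^sub>v ((- (P2i * S2)) *\<^sub>v x) \<le> s \<cdot>\<^sub>v x"
proof -
  have R2: "R2 \<in> carrier_mat n n" and S2: "S2 \<in> carrier_mat n n" and P2i: "P2i \<in> carrier_mat n n"
    and P2: "P2 \<in> carrier_mat n n" and inv2: "is_inverse_mat n P2 P2i"
    and P2i_0: "0\<^sub>m n n \<le> P2i" and X2_0: "0\<^sub>m n n \<le> P2i * R2" and PS2: "P2i * S2 \<le> 0\<^sub>m n n"
    using double_regular_splitting_imp_weak[OF split2]
    unfolding double_weak_regular_splitting_def is_inverse_mat_def by auto
  define X2 where "X2 = P2i * R2"
  define Y2 where "Y2 = - (P2i * S2)"
  have X2: "X2 \<in> carrier_mat n n" and Y2: "Y2 \<in> carrier_mat n n"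
    using P2i R2 S2 by (auto simp: X2_def Y2_def)
  have Y2_0: "0\<^sub>m n n \<le> Y2" unfolding Y2_def by (rule uminus_mat_nonneg[OF PS2])
  have s0: "0 < s"
    using rho_nonneg[OF companion_mat_carrier[OF X2 Y2]] n rho by (simp add: X2_def Y2_def)
  define B where "B = (1 / s) \<cdot>\<^sub>m X2 + (1 / s\<^sup>2) \<cdot>\<^sub>m Y2"
  have B: "B \<in> carrier_mat n n" using X2 Y2 by (simp add: B_def)
  have B0: "0\<^sub>m n n \<le> B" using X2_0 Y2_0 X2 Y2 s0 by (auto simp: B_def X2_def less_eq_mat_def)
  have rho_B: "rho B < 1"
    unfolding B_def using rho_less_1_if_rho_companion_mat_less[OF X2 Y2 n _ Y2_0 s0] X2_0 rho
    by (simp add: X2_def Y2_def)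
  define g where "g = P2i *\<^sub>v vec n (\<lambda>_. 1)"
  have g: "g \<in> carrier_vec n" using P2i by (simp add: g_def)
  have g_pos: "\<forall>i<n. 0 < g $ i" using nonneg_inverse_mult_ones_pos[OF inv2 P2i_0] by (simp add: g_def)
  have "P2 *\<^sub>v g = vec n (\<lambda>_. 1)"
    using inv2 P2 P2i unfolding g_def is_inverse_mat_def by (simp flip: assoc_mult_mat_vec[of P2 n n P2i n])
  then have P2g_pos: "\<forall>i<n. 0 < (P2 *\<^sub>v g) $ i" by simp
  obtain x where x: "x \<in> carrier_vec n" and x_pos: "\<forall>i<n. 0 < x $ i" and Bx: "B *\<^sub>v x \<le> x"
    and P2x: "0\<^sub>v n \<le> P2 *\<^sub>v (x - B *\<^sub>v x)"
    using truncated_neumann_supervector[OF B n B0 rho_B P2 g g_pos P2g_pos] by blast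
  have x0: "0\<^sub>v n \<le> x" using x x_pos by (auto simp: less_eq_vec_def less_imp_le)
  have "0\<^sub>v n \<le> A *\<^sub>v x"
    by (rule regular_splitting_mult_vec_nonneg[OF split2 s0 s1 x x0])
      (use P2x in \<open>simp add: B_def X2_def Y2_def\<close>)
  then have super1: "(P1i * R1) *\<^sub>v x + (- (P1i * S1)) *\<^sub>v x \<le> x"
    by (rule weak_regular_splitting_mult_vec_le[OF split1 x])
  have "(X2 *\<^sub>v x) $ i + (1 / s) * (Y2 *\<^sub>v x) $ i = s * (B *\<^sub>v x) $ i" if "i < n" for i
    using X2 Y2 x that s0
    by (simp add: B_def add_mult_distrib_mat_vec[of _ n n] smult_mat_mult_vec field_simps power2_eq_square)
  then have "X2 *\<^sub>v x + (1 / s) \<cdot>\<^sub>v (Y2 *\<^sub>v x) \<le> s \<cdot>\<^sub>v x"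
    using Bx B X2 Y2 x s0 by (auto simp: less_eq_vec_def)
  then show ?thesis using that[OF x x_pos super1] by (simp add: X2_def Y2_def)
qed

lemma rho_two_step_companion_mat_le:
  fixes A P1 R1 S1 P1i P2 R2 S2 P2i :: "real mat"
  assumes n: "n > 0"
    and split1: "double_weak_regular_splitting n A P1 R1 S1 P1i"
    and split2: "double_regular_splitting n A P2 R2 S2 P2i"
    and RS2: "P2i * R2 + P2i * S2 \<le> 0\<^sub>m n n"
    and rho: "rho (companion_mat n (P2i * R2) (- (P2i * S2))) < s" and s1: "s \<le> 1"
  shows "rho (companion_mat n (P2i * R2 * P1i * R1 - P2i * S2) (- (P2i * R2 * P1i * S1))) \<le> s"
proof -
  have R1: "R1 \<in> carrier_mat n n" and S1: "S1 \<in> carrier_mat n n" and P1i: "P1i \<in> carrier_mat n n"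
    and X1_0: "0\<^sub>m n n \<le> P1i * R1" and PS1: "P1i * S1 \<le> 0\<^sub>m n n"
    using split1 unfolding double_weak_regular_splitting_def is_inverse_mat_def by auto
  have R2: "R2 \<in> carrier_mat n n" and S2: "S2 \<in> carrier_mat n n" and P2i: "P2i \<in> carrier_mat n n"
    and X2_0: "0\<^sub>m n n \<le> P2i * R2" and PS2: "P2i * S2 \<le> 0\<^sub>m n n"
    using double_regular_splitting_imp_weak[OF split2]
    unfolding double_weak_regular_splitting_def is_inverse_mat_def by auto
  define X1 where "X1 = P1i * R1"
  define Y1 where "Y1 = - (P1i * S1)"
  define X2 where "X2 = P2i * R2"
  define Y2 where "Y2 = - (P2i * S2)"
  have X1: "X1 \<in> carrier_mat n n" and Y1: "Y1 \<in> carrier_mat n n"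
    and X2: "X2 \<in> carrier_mat n n" and Y2: "Y2 \<in> carrier_mat n n"
    using P1i R1 S1 P2i R2 S2 by (auto simp: X1_def Y1_def X2_def Y2_def)
  have Y1_0: "0\<^sub>m n n \<le> Y1" unfolding Y1_def by (rule uminus_mat_nonneg[OF PS1])
  have Y2_0: "0\<^sub>m n n \<le> Y2" unfolding Y2_def by (rule uminus_mat_nonneg[OF PS2])
  have X2_Y2: "X2 \<le> Y2"
    using RS2 P2i R2 S2 by (fastforce simp: X2_def Y2_def less_eq_mat_def)
  have s0: "0 < s"
    using rho_nonneg[OF companion_mat_carrier[OF X2 Y2]] n rho by (simp add: X2_def Y2_def)
  obtain x where x: "x \<in> carrier_vec n" and x_pos: "\<forall>i<n. 0 < x $ i"
    and super1: "X1 *\<^sub>v x + Y1 *\<^sub>v x \<le> x" and super2: "X2 *\<^sub>v x + (1 / s) \<cdot>\<^sub>v (Y2 *\<^sub>v x) \<le> s \<cdot>\<^sub>v x"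
    unfolding X1_def Y1_def X2_def Y2_def
    using splittings_common_supervector[OF n split1 split2 rho s1] by blast
  have x0: "0\<^sub>v n \<le> x" using x x_pos by (auto simp: less_eq_vec_def less_imp_le)
  have W1_0: "0\<^sub>m n n \<le> X2 * X1 + Y2"
    using mult_mat_nonneg[OF X2 X1 _ X1_0[folded X1_def]] X2_0 Y2_0 X1 X2 Y2
    by (auto simp: X2_def less_eq_mat_def)
  have W2_0: "0\<^sub>m n n \<le> X2 * Y1"
    using mult_mat_nonneg[OF X2 Y1 _ Y1_0] X2_0 by (simp add: X2_def)
  have "rho (companion_mat n (X2 * X1 + Y2) (X2 * Y1)) \<le> s"
    by (rule rho_companion_mat_le[OF _ _ n W1_0 W2_0 x x_pos s0
          two_step_supervector[OF X1 Y1 X2 Y2 _ _ X2_Y2 s0 s1 x x0 super1 super2]])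
      (use X1 Y1 X2 Y2 X1_0 X2_0 in \<open>auto simp: X1_def X2_def\<close>)
  moreover have "P2i * R2 * P1i * R1 - P2i * S2 = X2 * X1 + Y2"
    using P1i R1 P2i R2 S2
    by (auto simp: X1_def X2_def Y2_def assoc_mult_mat[of _ n n _ n _ n] minus_add_uminus_mat[of _ n n])
  moreover have "- (P2i * R2 * P1i * S1) = X2 * Y1"
    using P1i S1 P2i R2
    by (auto simp: X2_def Y1_def assoc_mult_mat[of _ n n _ n _ n] uminus_mult_right_mat)
  ultimately show ?thesis by simp
qed

theorem corollary3p18:
  fixes n :: nat and A P1 R1 S1 P2 R2 S2 P1i P2i :: "real mat"
  assumes "n > 0"
    and "A \<in> carrier_mat n n"
    and "monotone_mat n A"
    and "double_weak_regular_splitting n A P1 R1 S1 P1i"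
    and "double_regular_splitting n A P2 R2 S2 P2i"
    and "- 1 \<notin> rspectrum (R2 * P1i)"
    and "monotone_mat n ((1\<^sub>m n + R2 * P1i) * A)"
    and "P1i * R1 \<ge> P2i * R2"
    and "P2i * S2 \<ge> P1i * S1"
    and "P2i * R2 + P2i * S2 \<le> 0\<^sub>m n n"
  shows "rho (four_block_mat (P2i * R2 * P1i * R1 - P2i * S2) (- (P2i * R2 * P1i * S1)) (1\<^sub>m n) (0\<^sub>m n n))
           \<le> min (rho (four_block_mat (P1i * R1) (- (P1i * S1)) (1\<^sub>m n) (0\<^sub>m n n)))
                  (rho (four_block_mat (P2i * R2) (- (P2i * S2)) (1\<^sub>m n) (0\<^sub>m n n)))
       \<and> min (rho (four_block_mat (P1i * R1) (- (P1i * S1)) (1\<^sub>m n) (0\<^sub>m n n)))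
              (rho (four_block_mat (P2i * R2) (- (P2i * S2)) (1\<^sub>m n) (0\<^sub>m n n))) < 1"
proof -
  note weak2 = double_regular_splitting_imp_weak[OF assms(5)]
  have T2: "rho (companion_mat n (P2i * R2) (- (P2i * S2))) < 1"
    by (rule rho_weak_regular_splitting_companion_less_1[OF assms(1,3) weak2])
  have "rho (companion_mat n (P2i * R2) (- (P2i * S2))) \<le> rho (companion_mat n (P1i * R1) (- (P1i * S1)))"
    by (rule rho_weak_regular_splittings_companion_mono[OF assms(1,4) weak2 assms(8,9)])
  moreover have "rho (companion_mat n (P2i * R2 * P1i * R1 - P2i * S2) (- (P2i * R2 * P1i * S1)))
      \<le> rho (companion_mat n (P2i * R2) (- (P2i * S2)))"
  proof (rule dense_ge_bounded[OF T2])
    fix s assume "rho (companion_mat n (P2i * R2) (- (P2i * S2))) < s" and "s < 1"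
    then show "rho (companion_mat n (P2i * R2 * P1i * R1 - P2i * S2) (- (P2i * R2 * P1i * S1))) \<le> s"
      using rho_two_step_companion_mat_le[OF assms(1,4,5,10)] by simp
  qed
  ultimately show ?thesis using T2 by simp
qed

end
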